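(* Let $p\in(0,1)$, $\mu>0$, and let $k\ge 3$, $1\le \ell\le k-2$ and $m\ge 2$ be integers. Then there exist $n_0$ and $\alpha>0$ such that for every $n\ge n_0$ there exists a $(p,\mu)$-dense $k$-partite $k$-graph $H$, each of whose parts has exactly $n$ vertices, such that $\delta'_{\ell}(H)\ge \alpha n^{k-\ell}$ and $H$ has no $K_k(m)$-factor.
   Context: A $k$-graph $H$ has a vertex set $V(H)$ and an edge set $E(H)$ consisting of $k$-element subsets of $V(H)$. A $k$-partite $k$-graph comes with a fixed partition $V(H)=V_1\cup\dots\cup V_k$ (its parts) such that every edge meets each $V_i$ in at most one vertex. A set $S\subseteq V(H)$ is legal if $|S\cap V_i|\le 1$ for all $i$. For $S\subseteq V(H)$ with $|S|=s<k$, $\deg_H(S)$ is the number of $(k-s)$-sets $S'$ with $S\cup S'\in E(H)$. The partite minimum $s$-degree $\delta'_s(H)$ is the minimum of $\deg_H(S)$ over all legal $s$-subsets $S$. A $k$-partite $k$-graph $H$ with parts $V_1,\dots,V_k$ and $N=|V(H)|$ vertices is $(p,\mu)$-dense if for all $X_1\subseteq V_1,\dots,X_k\subseteq V_k$ we have $e_H(X_1,\dots,X_k)\ge p|X_1|\cdots|X_k|-\mu N^k$, where $e_H(X_1,\dots,X_k)$ is the number of $(x_1,\dots,x_k)\in X_1\times\dots\times X_k$ with $\{x_1,\dots,x_k\}\in E(H)$. $K_k(m)$ denotes the complete $k$-partite $k$-graph with each part of size $m$. An $F$-factor in $H$ is a set of pairwise vertex-disjoint subgraphs of $H$, each isomorphic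 to $F$, covering $V(H)$. *)

theory Defs
  imports "HOL-Library.FuncSet" Complex_Main
begin

definition kpart_vertices :: "nat \<Rightarrow> (nat \<Rightarrow> 'a set) \<Rightarrow> 'a set" where
  "kpart_vertices k V = (\<Union>i<k. V i)"

definition kpartite_kgraph :: "nat \<Rightarrow> (nat \<Rightarrow> 'a set) \<Rightarrow> 'a set set \<Rightarrow> bool" where
  "kpartite_kgraph k V E \<longleftrightarrow>
     (\<forall>i<k. finite (V i)) \<and>
     (\<forall>i<k. \<forall>j<k. i \<noteq> j \<longrightarrow> V i \<inter> V j = {}) \<and>
     (\<forall>e\<in>E. e \<subseteq> kpart_vertices k V \<and> card e = k \<and> (\<forall>i<k. card (e \<inter> V i) \<le> 1))"

definition legal :: "nat \<Rightarrow> (nat \<Rightarrow> 'a set) \<Rightarrow> 'a set \<Rightarrow> bool" where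
  "legal k V S \<longleftrightarrow> S \<subseteq> kpart_vertices k V \<and> (\<forall>i<k. card (S \<inter> V i) \<le> 1)"

definition hdeg :: "nat \<Rightarrow> 'a set set \<Rightarrow> 'a set \<Rightarrow> nat" where
  "hdeg k E S = card {S'. finite S' \<and> card S' = k - card S \<and> S \<union> S' \<in> E}"

definition partite_min_deg_ge :: "nat \<Rightarrow> (nat \<Rightarrow> 'a set) \<Rightarrow> 'a set set \<Rightarrow> nat \<Rightarrow> real \<Rightarrow> bool" where
  "partite_min_deg_ge k V E s d \<longleftrightarrow>
     (\<forall>S. finite S \<and> card S = s \<and> legal k V S \<longrightarrow> real (hdeg k E S) \<ge> d)"

definition e_H :: "nat \<Rightarrow> 'a set set \<Rightarrow> (nat \<Rightarrow> 'a set) \<Rightarrow> nat" where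
  "e_H k E X = card {x \<in> PiE {..<k} X. x ` {..<k} \<in> E}"

definition pmu_dense :: "nat \<Rightarrow> (nat \<Rightarrow> 'a set) \<Rightarrow> 'a set set \<Rightarrow> real \<Rightarrow> real \<Rightarrow> bool" where
  "pmu_dense k V E p \<mu> \<longleftrightarrow>
     (\<forall>X. (\<forall>i<k. X i \<subseteq> V i) \<longrightarrow>
        real (e_H k E X) \<ge> p * (\<Prod>i<k. real (card (X i)))
                          - \<mu> * real (card (kpart_vertices k V)) ^ k)"

definition subhypergraph :: "'a set \<times> 'a set set \<Rightarrow> 'a set \<times> 'a set set \<Rightarrow> bool" where
  "subhypergraph F H \<longleftrightarrow> fst F \<subseteq> fst H \<and> snd F \<subseteq> snd H \<and> (\<forall>e\<in>snd F. e \<subseteq> fst F)"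

definition hg_iso :: "'a set \<times> 'a set set \<Rightarrow> 'b set \<times> 'b set set \<Rightarrow> bool" where
  "hg_iso F G \<longleftrightarrow> (\<exists>f. bij_betw f (fst F) (fst G) \<and>
      (\<forall>e. e \<subseteq> fst F \<longrightarrow> (e \<in> snd F \<longleftrightarrow> f ` e \<in> snd G)))"

definition complete_kpartite :: "nat \<Rightarrow> nat \<Rightarrow> (nat \<times> nat) set \<times> (nat \<times> nat) set set" where
  "complete_kpartite k m =
     ({..<k} \<times> {..<m}, {(\<lambda>i. (i, g i)) ` {..<k} | g. \<forall>i<k. g i < m})"

definition has_factor :: "'a set \<times> 'a set set \<Rightarrow> 'b set \<times> 'b set set \<Rightarrow> bool" where
  "has_factor H F \<longleftrightarrow> (\<exists>\<F>. (\<forall>G\<in>\<F>. subhypergraph G H \<and> hg_iso G F) \<and>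
      (\<forall>G\<in>\<F>. \<forall>G'\<in>\<F>. G \<noteq> G' \<longrightarrow> fst G \<inter> fst G' = {}) \<and>
      (\<Union>G\<in>\<F>. fst G) = fst H)"

end

theory Submission
  imports Defs
begin

text \<open>
  Put the vertices 0, ..., k n - 1 into parts of n consecutive vertices, let U be the first
  u vertices of part 0 and W the first w vertices of each other part, where u > (k - 1) w
  = |W|. Take as edges all crossing k-sets except those meeting U but not W. Only tuples
  through U are missing, so for u \<le> \<mu> n the graph is (p, \<mu>)-dense; a legal l-set
  misses some part other than part 0 and can be completed through W there, giving degree
  at least w n^(k-l-1). A copy of K_k(m) meets part 0, hence U, in at most m vertices, and
  if it meets U then some part of it lies inside W (otherwise a transversal of the copy
  through U avoiding W would be an edge), so it meets W in at least m vertices. A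
  K_k(m)-factor would therefore give |U| \<le> |W|. Taking w = n div d for a constant d of order
  k / \<mu> and u = (k - 1) w + 1 gives the theorem.
\<close>

lemma partite_min_deg_ge_mono:
  "partite_min_deg_ge k V E l d \<Longrightarrow> d' \<le> d \<Longrightarrow> partite_min_deg_ge k V E l d'"
  unfolding partite_min_deg_ge_def by force

lemma card_legal_eq_card_parts_met:
  assumes H: "kpartite_kgraph k V E" and S: "legal k V S"
  shows "card S = card {i\<in>{..<k}. S \<inter> V i \<noteq> {}}"
proof -
  have fin: "finite (S \<inter> V i)" if "i < k" for i
    using H that by (auto simp: kpartite_kgraph_def)
  have "S = (\<Union>i<k. S \<inter> V i)" using S by (auto simp: legal_def kpart_vertices_def)
  also have "card \<dots> = (\<Sum>i<k. card (S \<inter> V i))"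
    using H fin by (intro card_UN_disjoint) (auto simp: kpartite_kgraph_def)
  also have "\<dots> = (\<Sum>i<k. if S \<inter> V i \<noteq> {} then 1 else 0)"
  proof (rule sum.cong)
    fix i assume "i \<in> {..<k}"
    then have "card (S \<inter> V i) \<le> 1" "finite (S \<inter> V i)" using S fin by (auto simp: legal_def)
    then show "card (S \<inter> V i) = (if S \<inter> V i \<noteq> {} then 1 else 0)"
      by (metis One_nat_def card_0_eq le_SucE le_zero_eq)
  qed simp
  also have "\<dots> = (\<Sum>i\<in>{i\<in>{..<k}. S \<inter> V i \<noteq> {}}. 1)"
    by (rule sum.inter_filter[symmetric]) simp
  also have "\<dots> = card {i\<in>{..<k}. S \<inter> V i \<noteq> {}}"
    by simp
  finally show ?thesis .
qed

lemma card_parts_missed_legal: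
  assumes H: "kpartite_kgraph k V E" and S: "legal k V S"
  shows "card {i\<in>{..<k}. S \<inter> V i = {}} = k - card S"
proof -
  let ?M = "{i\<in>{..<k}. S \<inter> V i = {}}"
  have "?M \<subseteq> {..<k}" by auto
  then have "card ({..<k} - ?M) = k - card ?M" "card ?M \<le> k"
    using card_mono[of "{..<k}" ?M] by (simp_all add: card_Diff_subset finite_subset)
  moreover have "{..<k} - ?M = {i\<in>{..<k}. S \<inter> V i \<noteq> {}}" by auto
  ultimately have "card S = k - card ?M" "card ?M \<le> k"
    using card_legal_eq_card_parts_met[OF H S] by simp_all
  then show ?thesis by simp
qed

lemma legal_empty: "legal k V {}"
  by (simp add: legal_def)

lemma legal_Un_transversal:
  assumes H: "kpartite_kgraph k V E" and S: "legal k V S" and M: "M \<subseteq> {..<k}"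
    and avoid: "\<forall>i\<in>M. S \<inter> V i = {}" and x: "\<forall>i\<in>M. x i \<in> V i"
  shows "legal k V (S \<union> x ` M)" "card (S \<union> x ` M) = card S + card M"
proof -
  have part_unique: "i = j" if "x j \<in> V i" "j \<in> M" "i < k" for i j
  proof (rule ccontr)
    assume "i \<noteq> j"
    moreover have "j < k" using M that(2) by auto
    ultimately have "V i \<inter> V j = {}" using H that(3) by (simp add: kpartite_kgraph_def)
    then show False using x that by blast
  qed
  show "legal k V (S \<union> x ` M)" unfolding legal_def
  proof (intro conjI allI impI)
    show "S \<union> x ` M \<subseteq> kpart_vertices k V"
      using S M x by (auto simp: legal_def kpart_vertices_def)
    fix i assume "i < k"
    show "card ((S \<union> x ` M) \<inter> V i) \<le> 1"
    proof (cases "i \<in> M")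
      case True
      then have "(S \<union> x ` M) \<inter> V i \<subseteq> {x i}"
        using avoid part_unique \<open>i < k\<close> by auto
      then show ?thesis
        by (metis card_mono finite.emptyI finite.insertI is_singletonI is_singleton_altdef)
    next
      case False
      then have "(S \<union> x ` M) \<inter> V i = S \<inter> V i"
        using part_unique \<open>i < k\<close> by auto
      then show ?thesis using S \<open>i < k\<close> by (simp add: legal_def)
    qed
  qed
  have "finite M" using M by (rule finite_subset) simp
  have "finite (kpart_vertices k V)" using H by (simp add: kpart_vertices_def kpartite_kgraph_def)
  then have "finite S" using S finite_subset unfolding legal_def by blast
  moreover have "S \<inter> x ` M = {}" using avoid x by auto
  moreover have "inj_on x M"
  proof (rule inj_onI)
    fix i j assume "i \<in> M" "j \<in> M" "x i = x j"
    moreover have "i < k" using M \<open>i \<in> M\<close> by blast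
    ultimately show "i = j" using part_unique[of j i] x by metis
  qed
  ultimately show "card (S \<union> x ` M) = card S + card M"
    using \<open>finite M\<close> by (simp add: card_Un_disjoint card_image)
qed

lemma card_images_PiE_disjoint:
  assumes "finite M" and disj: "\<forall>i\<in>M. \<forall>j\<in>M. i \<noteq> j \<longrightarrow> Y i \<inter> Y j = {}"
  shows "card ((\<lambda>x. x ` M) ` PiE M Y) = (\<Prod>i\<in>M. card (Y i))"
proof -
  have "inj_on (\<lambda>x. x ` M) (PiE M Y)"
  proof (rule inj_onI)
    fix x y assume x: "x \<in> PiE M Y" and y: "y \<in> PiE M Y" and eq: "x ` M = y ` M"
    show "x = y"
    proof (rule PiE_ext[OF x y])
      fix i assume i: "i \<in> M"
      then obtain j where j: "j \<in> M" "x i = y j" using eq by blast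
      have "x i \<in> Y i" "y j \<in> Y j" using PiE_mem[OF x i] PiE_mem[OF y j(1)] .
      then have "Y i \<inter> Y j \<noteq> {}" using j(2) by auto
      then have "i = j" using disj i j(1) by blast
      then show "x i = y i" using j by simp
    qed
  qed
  then show ?thesis using assms(1) by (simp add: card_image card_PiE)
qed


lemma card_eq_sum_card_Int_partition:
  assumes "pairwise disjnt AA" "\<Union>AA = X" "finite X" "B \<subseteq> X"
  shows "card B = (\<Sum>A\<in>AA. card (A \<inter> B))"
proof -
  have fin: "finite AA" using assms(2,3) by (metis finite_UnionD)
  have "B = (\<Union>A\<in>AA. A \<inter> B)" using assms(2,4) by blast
  also have "card \<dots> = (\<Sum>A\<in>AA. card (A \<inter> B))"
    using assms(1,2,3) fin
    by (intro card_UN_disjoint) (auto simp: pairwise_def disjnt_def intro: finite_subset)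
  finally show ?thesis .
qed

lemma hg_iso_inverse:
  assumes "hg_iso G K"
  obtains h where "bij_betw h (fst K) (fst G)"
    "\<And>e. e \<subseteq> fst K \<Longrightarrow> e \<in> snd K \<Longrightarrow> h ` e \<in> snd G"
proof -
  obtain f where f: "bij_betw f (fst G) (fst K)"
    and iso: "\<And>e. e \<subseteq> fst G \<Longrightarrow> e \<in> snd G \<longleftrightarrow> f ` e \<in> snd K"
    using assms unfolding hg_iso_def by blast
  have h: "bij_betw (inv_into (fst G) f) (fst K) (fst G)"
    using f by (rule bij_betw_inv_into)
  have "inv_into (fst G) f ` e \<in> snd G" if e: "e \<subseteq> fst K" "e \<in> snd K" for e
  proof -
    have "inv_into (fst G) f ` e \<subseteq> fst G" using h e(1) bij_betw_imp_surj_on by blast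
    moreover have "f ` inv_into (fst G) f ` e = e"
      using image_inv_into_cancel[OF bij_betw_imp_surj_on[OF f] e(1)] .
    ultimately show ?thesis using iso e(2) by auto
  qed
  with h show ?thesis by (rule that)
qed

text \<open>An embedding of K_k(m) onto A, remembering only that its edges are mapped to edges.\<close>
definition kpartite_copy :: "nat \<Rightarrow> nat \<Rightarrow> 'a set set \<Rightarrow> (nat \<times> nat \<Rightarrow> 'a) \<Rightarrow> 'a set \<Rightarrow> bool" where
  "kpartite_copy k m E h A \<longleftrightarrow> bij_betw h ({..<k} \<times> {..<m}) A \<and>
     (\<forall>g. (\<forall>i<k. g i < m) \<longrightarrow> (\<lambda>i. h (i, g i)) ` {..<k} \<in> E)"

lemma has_factor_complete_kpartite_partition:
  assumes "has_factor (X, E) (complete_kpartite k m)"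
  obtains AA where "pairwise disjnt AA" "\<Union>AA = X" "\<And>A. A \<in> AA \<Longrightarrow> \<exists>h. kpartite_copy k m E h A"
proof -
  obtain FF where copies: "\<forall>G\<in>FF. subhypergraph G (X, E) \<and> hg_iso G (complete_kpartite k m)"
    and disj: "\<forall>G\<in>FF. \<forall>G'\<in>FF. G \<noteq> G' \<longrightarrow> fst G \<inter> fst G' = {}"
    and cover: "\<Union>(fst ` FF) = X"
    using assms unfolding has_factor_def fst_conv by blast
  have "pairwise disjnt (fst ` FF)"
  proof (rule pairwiseI)
    fix A B assume "A \<in> fst ` FF" "B \<in> fst ` FF" "A \<noteq> B"
    then obtain G G' where "G \<in> FF" "G' \<in> FF" "A = fst G" "B = fst G'" by blast
    with disj \<open>A \<noteq> B\<close> show "disjnt A B" unfolding disjnt_def by metis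
  qed
  moreover have "\<exists>h. kpartite_copy k m E h A" if "A \<in> fst ` FF" for A
  proof -
    obtain G where G: "G \<in> FF" "A = fst G" using \<open>A \<in> fst ` FF\<close> by blast
    then have "hg_iso G (complete_kpartite k m)" using copies by blast
    then obtain h where h: "bij_betw h ({..<k} \<times> {..<m}) A"
      and hE: "\<And>e. e \<subseteq> {..<k} \<times> {..<m} \<Longrightarrow> e \<in> snd (complete_kpartite k m) \<Longrightarrow> h ` e \<in> snd G"
      by (rule hg_iso_inverse) (simp_all add: G(2) complete_kpartite_def)
    have "(\<lambda>i. h (i, g i)) ` {..<k} \<in> E" if "\<forall>i<k. g i < m" for g
    proof -
      have "h ` (\<lambda>i. (i, g i)) ` {..<k} \<in> snd G"
        using that by (intro hE) (auto simp: complete_kpartite_def)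
      then show ?thesis using copies G(1) by (auto simp: subhypergraph_def image_image)
    qed
    then show ?thesis using h by (auto simp: kpartite_copy_def)
  qed
  ultimately show ?thesis using cover that by blast
qed

lemma kpartite_copy_card_part_le:
  assumes H: "kpartite_kgraph k V E" and copy: "kpartite_copy k m E h A" and "j < k"
  shows "card (A \<inter> V j) \<le> m"
proof (cases "A \<inter> V j = {}")
  case False
  have h: "bij_betw h ({..<k} \<times> {..<m}) A"
    and edge: "\<And>g. \<forall>i<k. g i < m \<Longrightarrow> (\<lambda>i. h (i, g i)) ` {..<k} \<in> E"
    using copy by (auto simp: kpartite_copy_def)
  obtain a s where as: "a < k" "s < m" "h (a, s) \<in> V j"
    using False h by (auto simp: bij_betw_def)
  have "A \<inter> V j \<subseteq> h ` ({a} \<times> {..<m})"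
  proof
    fix v assume v: "v \<in> A \<inter> V j"
    then obtain b t where bt: "b < k" "t < m" "v = h (b, t)" using h by (auto simp: bij_betw_def)
    have "b = a"
    proof (rule ccontr)
      assume "b \<noteq> a"
      define e where "e = (\<lambda>i. h (i, if i = b then t else s)) ` {..<k}"
      have "e \<in> E" unfolding e_def using as bt by (intro edge) auto
      then have "card (e \<inter> V j) \<le> 1" using H \<open>j < k\<close> by (auto simp: kpartite_kgraph_def)
      moreover have "h (a, s) \<in> e" unfolding e_def
        using as \<open>b \<noteq> a\<close> by (intro image_eqI[of _ _ a]) auto
      moreover have "v \<in> e" unfolding e_def using bt by (intro image_eqI[of _ _ b]) auto
      moreover have "finite e" unfolding e_def by simp
      ultimately have "h (a, s) = h (b, t)"
        using card_le_Suc0_iff_eq[of "e \<inter> V j"] as(3) v bt(3) by auto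
      then show False
        using h as bt \<open>b \<noteq> a\<close> by (auto simp: bij_betw_def dest: inj_onD)
    qed
    then show "v \<in> h ` ({a} \<times> {..<m})" using bt by auto
  qed
  then have "card (A \<inter> V j) \<le> card (h ` ({a} \<times> {..<m}))" by (intro card_mono) auto
  also have "\<dots> \<le> m" using card_image_le[of "{a} \<times> {..<m}" h] by simp
  finally show ?thesis .
qed simp

locale space_barrier =
  fixes k n u w :: nat
  assumes k_pos: "0 < k" and n_pos: "0 < n" and u_le: "u \<le> n" and w_le: "w \<le> n"
    and W_small: "(k - 1) * w < u"
begin

definition part :: "nat \<Rightarrow> nat set" where "part i = {i * n..<i * n + n}"

definition U :: "nat set" where "U = {..<u}"

definition W :: "nat set" where "W = {v. n \<le> v \<and> v < k * n \<and> v mod n < w}"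

definition edges :: "nat set set" where
  "edges = {e. legal k part e \<and> card e = k \<and> (e \<inter> U \<noteq> {} \<longrightarrow> e \<inter> W \<noteq> {})}"

lemma mem_part_iff: "v \<in> part i \<longleftrightarrow> v div n = i"
proof
  assume "v \<in> part i"
  then have "n * i \<le> v" "v < n * Suc i" unfolding part_def by (auto simp: mult.commute)
  then show "v div n = i" by (rule div_nat_eqI)
next
  assume "v div n = i"
  moreover have "v = v div n * n + v mod n" "v mod n < n" using n_pos by simp_all
  ultimately show "v \<in> part i" unfolding part_def by (metis atLeastLessThan_iff add_less_cancel_left le_add1)
qed

lemma part_disjoint: "i \<noteq> j \<Longrightarrow> part i \<inter> part j = {}"
  by (auto simp: mem_part_iff)

lemma card_part: "card (part i) = n"
  by (simp add: part_def)

lemma kpart_vertices_part: "kpart_vertices k part = {..<k * n}"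
  unfolding kpart_vertices_def using n_pos
  by (auto simp: mem_part_iff less_mult_imp_div_less div_less_iff_less_mult)

lemma kpartite_kgraph_edges: "kpartite_kgraph k part edges"
  unfolding kpartite_kgraph_def edges_def legal_def
  using part_disjoint by (auto simp: part_def)

lemma U_subset_part0: "U \<subseteq> part 0"
  using u_le by (auto simp: U_def part_def)

lemma U_W_disjoint: "U \<inter> W = {}"
  using u_le by (auto simp: U_def W_def)

lemma part_Int_W:
  assumes "1 \<le> j" "j < k"
  shows "part j \<inter> W = {j * n..<j * n + w}"
proof (intro set_eqI iffI)
  fix v assume "v \<in> part j \<inter> W"
  then have "v div n = j" "v mod n < w" by (auto simp: mem_part_iff W_def)
  then show "v \<in> {j * n..<j * n + w}" using div_mult_mod_eq[of v n] by auto
next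
  fix v assume "v \<in> {j * n..<j * n + w}"
  then obtain r where v: "v = j * n + r" "r < w" by (metis atLeastLessThan_iff le_Suc_ex add_less_cancel_left)
  then have "r < n" using w_le by simp
  then have "v div n = j" "v mod n = r" using v by simp_all
  moreover have "n \<le> v" using assms(1) v by (metis le_add1 le_trans mult_1 mult_le_mono1)
  moreover have "v < k * n" using div_less_iff_less_mult[OF n_pos, of v k] \<open>v div n = j\<close> assms(2) by simp
  ultimately show "v \<in> part j \<inter> W" using v(2) by (simp add: mem_part_iff W_def)
qed

lemma card_part_Int_W: "1 \<le> j \<Longrightarrow> j < k \<Longrightarrow> card (part j \<inter> W) = w"
  by (simp add: part_Int_W)

lemma card_W_le: "card W \<le> (k - 1) * w"
proof -
  have "W \<subseteq> (\<Union>j\<in>{1..<k}. part j \<inter> W)"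
  proof
    fix v assume v: "v \<in> W"
    then have "n div n \<le> v div n" "v div n < k"
      using n_pos div_le_mono[of n v n] by (auto simp: W_def div_less_iff_less_mult)
    then show "v \<in> (\<Union>j\<in>{1..<k}. part j \<inter> W)" using n_pos v by (auto simp: mem_part_iff)
  qed
  then have "card W \<le> card (\<Union>j\<in>{1..<k}. part j \<inter> W)"
    by (intro card_mono) (auto simp: part_def)
  also have "\<dots> \<le> (\<Sum>j\<in>{1..<k}. card (part j \<inter> W))" by (rule card_UN_le) simp
  also have "\<dots> = (k - 1) * w" using w_le by (simp add: part_Int_W)
  finally show ?thesis .
qed

lemma transversal_avoiding_U_in_edges:
  assumes x: "\<forall>i<k. x i \<in> part i" and "x 0 \<notin> U"
  shows "x ` {..<k} \<in> edges"
proof -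
  have "legal k part ({} \<union> x ` {..<k})" "card ({} \<union> x ` {..<k}) = card {} + card {..<k}"
    using legal_Un_transversal[OF kpartite_kgraph_edges legal_empty, of "{..<k}" x] x by auto
  moreover have "x ` {..<k} \<inter> U = {}"
  proof -
    have "j = 0" if "j < k" "x j \<in> U" for j
      using that x U_subset_part0 part_disjoint by blast
    then show ?thesis using \<open>x 0 \<notin> U\<close> by auto
  qed
  ultimately show ?thesis by (simp add: edges_def)
qed

lemma card_PiE_through_U_le:
  assumes X: "\<forall>i<k. X i \<subseteq> part i"
  shows "card (PiE {..<k} (X(0 := X 0 \<inter> U))) \<le> u * n ^ (k - 1)"
proof -
  have "card (PiE {..<k} (X(0 := X 0 \<inter> U))) = (\<Prod>i<k. card ((X(0 := X 0 \<inter> U)) i))"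
    by (simp add: card_PiE)
  also have "\<dots> \<le> (\<Prod>i<k. if i = 0 then u else n)"
  proof (rule prod_mono)
    fix i assume "i \<in> {..<k}"
    have "card (X 0 \<inter> U) \<le> u" using card_mono[of U "X 0 \<inter> U"] by (simp add: U_def)
    moreover have "card (X i) \<le> n" if "i \<noteq> 0"
      using X \<open>i \<in> {..<k}\<close> card_mono[of "part i" "X i"] by (simp add: card_part part_def)
    ultimately show "0 \<le> card ((X(0 := X 0 \<inter> U)) i) \<and> card ((X(0 := X 0 \<inter> U)) i) \<le> (if i = 0 then u else n)"
      by simp
  qed
  also have "\<dots> = u * n ^ (k - 1)"
    using k_pos prod.lessThan_Suc_shift[of "\<lambda>i. if i = 0 then u else n" "k - 1"] by simp
  finally show ?thesis .
qed

lemma e_H_ge_card_PiE_diff_through_U: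
  assumes X: "\<forall>i<k. X i \<subseteq> part i"
  shows "real (card (PiE {..<k} X)) - real (card (PiE {..<k} (X(0 := X 0 \<inter> U))))
    \<le> real (e_H k edges X)"
proof -
  define P where "P = PiE {..<k} X"
  define B where "B = PiE {..<k} (X(0 := X 0 \<inter> U))"
  have "finite P" unfolding P_def using X finite_subset[of _ "part _"]
    by (intro finite_PiE) (auto simp: part_def)
  have "B \<subseteq> P" unfolding B_def P_def by (rule PiE_mono) auto
  have "P - B \<subseteq> {x \<in> P. x ` {..<k} \<in> edges}"
  proof
    fix x assume x: "x \<in> P - B"
    then have "x 0 \<notin> U" unfolding P_def B_def by (auto simp: PiE_iff split: if_splits)
    moreover have "\<forall>i<k. x i \<in> part i" using x X unfolding P_def by (auto simp: PiE_iff)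
    ultimately show "x \<in> {x \<in> P. x ` {..<k} \<in> edges}"
      using x transversal_avoiding_U_in_edges by auto
  qed
  then have "card (P - B) \<le> e_H k edges X"
    unfolding e_H_def P_def[symmetric] using \<open>finite P\<close> by (intro card_mono) auto
  moreover have "card (P - B) = card P - card B"
    using \<open>B \<subseteq> P\<close> \<open>finite P\<close> by (meson card_Diff_subset finite_subset)
  moreover have "card B \<le> card P" using \<open>B \<subseteq> P\<close> \<open>finite P\<close> by (rule card_mono[rotated])
  ultimately show ?thesis unfolding P_def B_def by linarith
qed

lemma pmu_dense_edges:
  assumes p: "p \<le> 1" and u_small: "real u \<le> \<mu> * real n"
  shows "pmu_dense k part edges p \<mu>"
  unfolding pmu_dense_def
proof (intro allI impI)
  fix X assume X: "\<forall>i<k. X i \<subseteq> part i"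
  define P where "P = PiE {..<k} X"
  define B where "B = PiE {..<k} (X(0 := X 0 \<inter> U))"
  have "0 \<le> \<mu>"
  proof -
    have "0 < real u" using W_small by simp
    then have "0 < \<mu> * real n" using u_small by linarith
    then show ?thesis using n_pos by (simp add: zero_less_mult_iff)
  qed
  have "real (card B) \<le> real u * real n ^ (k - 1)"
    using card_PiE_through_U_le[OF X] unfolding B_def by (metis of_nat_le_iff of_nat_mult of_nat_power)
  also have "\<dots> \<le> \<mu> * real n * real n ^ (k - 1)" using u_small by (simp add: mult_right_mono)
  also have "\<dots> = \<mu> * real n ^ k" using k_pos by (simp add: power_eq_if)
  also have "\<dots> \<le> \<mu> * real (k * n) ^ k"
  proof -
    have "real n \<le> real (k * n)" using k_pos by (simp del: of_nat_mult)
    then show ?thesis using \<open>0 \<le> \<mu>\<close> by (intro mult_left_mono power_mono) auto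
  qed
  finally have "real (card B) \<le> \<mu> * real (k * n) ^ k" .
  moreover have "p * real (card P) \<le> real (card P)" using mult_right_mono[OF p, of "real (card P)"] by simp
  moreover have "real (card P) - real (card B) \<le> real (e_H k edges X)"
    using e_H_ge_card_PiE_diff_through_U[OF X] unfolding P_def B_def .
  ultimately show "p * (\<Prod>i<k. real (card (X i))) - \<mu> * real (card (kpart_vertices k part)) ^ k
      \<le> real (e_H k edges X)"
    by (simp add: P_def card_PiE kpart_vertices_part)
qed

lemma extension_through_W_in_edges:
  assumes S: "legal k part S" and M: "M = {i\<in>{..<k}. S \<inter> part i = {}}"
    and x: "\<forall>i\<in>M. x i \<in> part i" and "j \<in> M" "x j \<in> W"
  shows "S \<union> x ` M \<in> edges" "card (x ` M) = k - card S"
proof -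
  have "M \<subseteq> {..<k}" "\<forall>i\<in>M. S \<inter> part i = {}" by (auto simp: M)
  note transversal = legal_Un_transversal[OF kpartite_kgraph_edges _ \<open>M \<subseteq> {..<k}\<close> _ x]
  have "card M = k - card S" unfolding M by (rule card_parts_missed_legal[OF kpartite_kgraph_edges S])
  moreover have "card S \<le> k"
    using card_legal_eq_card_parts_met[OF kpartite_kgraph_edges S]
      card_mono[of "{..<k}" "{i\<in>{..<k}. S \<inter> part i \<noteq> {}}"] by auto
  ultimately show "card (x ` M) = k - card S" using transversal(2)[OF legal_empty] by simp
  show "S \<union> x ` M \<in> edges"
    using transversal[OF S \<open>\<forall>i\<in>M. S \<inter> part i = {}\<close>] \<open>card M = k - card S\<close> \<open>card S \<le> k\<close>
      \<open>j \<in> M\<close> \<open>x j \<in> W\<close>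
    by (auto simp: edges_def)
qed

lemma partite_min_deg_ge_edges:
  assumes "l + 2 \<le> k"
  shows "partite_min_deg_ge k part edges l (real (w * n ^ (k - l - 1)))"
  unfolding partite_min_deg_ge_def
proof (intro allI impI)
  fix S assume "finite S \<and> card S = l \<and> legal k part S"
  then have S: "card S = l" "legal k part S" by auto
  define M where "M = {i\<in>{..<k}. S \<inter> part i = {}}"
  have "M \<subseteq> {..<k}" "finite M" by (auto simp: M_def)
  have card_M: "card M = k - l"
    unfolding M_def S(1)[symmetric] by (rule card_parts_missed_legal[OF kpartite_kgraph_edges S(2)])
  obtain j0 where j0: "j0 \<in> M" "j0 \<noteq> 0"
  proof -
    have "\<not> M \<subseteq> {0}" using card_mono[of "{0::nat}" M] card_M assms by auto
    then show ?thesis using that by blast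
  qed
  define Y where "Y i = (if i = j0 then part j0 \<inter> W else part i)" for i
  define extensions where "extensions = (\<lambda>x. x ` M) ` PiE M Y"
  have "card extensions = (\<Prod>i\<in>M. card (Y i))"
    unfolding extensions_def using \<open>finite M\<close> part_disjoint
    by (intro card_images_PiE_disjoint) (auto simp: Y_def)
  also have "\<dots> = card (Y j0) * (\<Prod>i\<in>M - {j0}. card (Y i))"
    using \<open>finite M\<close> j0(1) by (rule prod.remove)
  also have "\<dots> = w * n ^ (k - l - 1)"
    using j0 \<open>M \<subseteq> {..<k}\<close> \<open>finite M\<close> card_M
    by (auto simp: Y_def card_part card_part_Int_W)
  finally have card_extensions: "card extensions = w * n ^ (k - l - 1)" .
  define T where "T = {S'. finite S' \<and> card S' = k - card S \<and> S \<union> S' \<in> edges}"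
  have "extensions \<subseteq> T"
  proof
    fix S' assume "S' \<in> extensions"
    then obtain x where x: "x \<in> PiE M Y" and S': "S' = x ` M" unfolding extensions_def by blast
    have "\<forall>i\<in>M. x i \<in> part i" using x by (auto simp: Y_def PiE_iff split: if_splits)
    moreover have "x j0 \<in> W" using x j0(1) by (auto simp: Y_def PiE_iff)
    ultimately show "S' \<in> T"
      using extension_through_W_in_edges[OF S(2) M_def _ j0(1)] S' \<open>finite M\<close> by (simp add: T_def)
  qed
  moreover have "finite T"
    by (rule finite_subset[of _ "Pow {..<k * n}"])
      (auto simp: T_def edges_def legal_def kpart_vertices_part)
  ultimately have "card extensions \<le> hdeg k edges S"
    unfolding hdeg_def T_def[symmetric] by (rule card_mono[rotated])
  then show "real (w * n ^ (k - l - 1)) \<le> real (hdeg k edges S)"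
    unfolding card_extensions by (simp only: of_nat_le_iff)
qed

lemma card_copy_Int_W_ge:
  assumes copy: "kpartite_copy k m edges h A" and "A \<inter> U \<noteq> {}"
  shows "m \<le> card (A \<inter> W)"
proof -
  have h: "bij_betw h ({..<k} \<times> {..<m}) A"
    and edge: "\<And>g. \<forall>i<k. g i < m \<Longrightarrow> (\<lambda>i. h (i, g i)) ` {..<k} \<in> edges"
    using copy by (auto simp: kpartite_copy_def)
  obtain a s where as: "a < k" "s < m" "h (a, s) \<in> U"
    using \<open>A \<inter> U \<noteq> {}\<close> h by (auto simp: bij_betw_def)
  have "\<exists>j<k. \<forall>t<m. h (j, t) \<in> W"
  proof (rule ccontr)
    assume "\<not> (\<exists>j<k. \<forall>t<m. h (j, t) \<in> W)"
    then obtain t where t: "\<And>j. j < k \<Longrightarrow> t j < m \<and> h (j, t j) \<notin> W" by metis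
    define e where "e = (\<lambda>i. h (i, if i = a then s else t i)) ` {..<k}"
    have "e \<in> edges" unfolding e_def using as t by (intro edge) auto
    moreover have "h (a, s) \<in> e \<inter> U" unfolding e_def using as by (auto intro!: image_eqI[of _ _ a])
    ultimately obtain i where "i < k" "h (i, if i = a then s else t i) \<in> W"
      unfolding edges_def e_def by blast
    then show False using t as U_W_disjoint by (auto split: if_splits)
  qed
  then obtain j where j: "j < k" "\<forall>t<m. h (j, t) \<in> W" by blast
  have "h ` ({j} \<times> {..<m}) \<subseteq> A \<inter> W" using j h by (auto simp: bij_betw_def)
  moreover have "card (h ` ({j} \<times> {..<m})) = m"
    using j(1) h by (subst card_image) (auto simp: bij_betw_def intro: inj_on_subset)
  moreover have "finite W" by (simp add: W_def)
  ultimately show ?thesis by (metis card_mono finite_Int)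
qed

lemma card_copy_Int_U_le_Int_W:
  assumes copy: "kpartite_copy k m edges h A"
  shows "card (A \<inter> U) \<le> card (A \<inter> W)"
proof (cases "A \<inter> U = {}")
  case False
  have "finite A" using copy bij_betw_finite[of h "{..<k} \<times> {..<m}" A] by (simp add: kpartite_copy_def)
  then have "card (A \<inter> U) \<le> card (A \<inter> part 0)" using U_subset_part0 by (intro card_mono) auto
  also have "\<dots> \<le> m" using kpartite_copy_card_part_le[OF kpartite_kgraph_edges copy k_pos] .
  also have "\<dots> \<le> card (A \<inter> W)" using card_copy_Int_W_ge[OF copy False] .
  finally show ?thesis .
qed simp

lemma not_has_factor: "\<not> has_factor (kpart_vertices k part, edges) (complete_kpartite k m)"
proof
  assume "has_factor (kpart_vertices k part, edges) (complete_kpartite k m)"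
  then obtain AA where AA: "pairwise disjnt AA" "\<Union>AA = {..<k * n}"
    and copies: "\<And>A. A \<in> AA \<Longrightarrow> \<exists>h. kpartite_copy k m edges h A"
    unfolding kpart_vertices_part by (rule has_factor_complete_kpartite_partition) blast
  have "U \<subseteq> {..<k * n}" using U_subset_part0 kpart_vertices_part k_pos
    unfolding kpart_vertices_def by blast
  then have "card U = (\<Sum>A\<in>AA. card (A \<inter> U))"
    using card_eq_sum_card_Int_partition[OF AA] by simp
  moreover have "card W = (\<Sum>A\<in>AA. card (A \<inter> W))"
    using card_eq_sum_card_Int_partition[OF AA] by (simp add: W_def subset_eq)
  moreover have "card U = u" by (simp add: U_def)
  moreover have "(\<Sum>A\<in>AA. card (A \<inter> U)) \<le> (\<Sum>A\<in>AA. card (A \<inter> W))"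
    using copies card_copy_Int_U_le_Int_W by (meson sum_mono)
  ultimately show False using card_W_le W_small by linarith
qed

end

lemma space_barrier_graph_exists:
  fixes \<mu> p :: real
  assumes "0 < k" "0 < n" "u \<le> n" "w \<le> n" "(k - 1) * w < u" "real u \<le> \<mu> * real n"
    and "p \<le> 1" "l + 2 \<le> k"
  shows "\<exists>(V::nat \<Rightarrow> nat set) E. kpartite_kgraph k V E \<and> (\<forall>i<k. card (V i) = n) \<and>
    pmu_dense k V E p \<mu> \<and> partite_min_deg_ge k V E l (real (w * n ^ (k - l - 1))) \<and>
    \<not> has_factor (kpart_vertices k V, E) (complete_kpartite k m)"
proof -
  interpret space_barrier k n u w using assms by unfold_locales
  show ?thesis
    using kpartite_kgraph_edges card_part pmu_dense_edges partite_min_deg_ge_edges not_has_factor assms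
    by blast
qed

lemma barrier_parameters:
  fixes \<mu> :: real
  assumes "0 < \<mu>" "0 < k" and d: "d = k * nat \<lceil>1 / \<mu>\<rceil>" and "d \<le> n"
  defines "q \<equiv> n div d"
  shows "(k - 1) * q + 1 \<le> n" "q \<le> n" "real ((k - 1) * q + 1) \<le> \<mu> * real n"
    "real n / (2 * d) \<le> real q"
proof -
  define c where "c = nat \<lceil>1 / \<mu>\<rceil>"
  have "1 / \<mu> \<le> real c" unfolding c_def by linarith
  then have \<mu>c: "1 \<le> \<mu> * real c"
    using pos_divide_le_eq[OF \<open>0 < \<mu>\<close>, of 1 "real c"] by (simp add: mult.commute)
  have "1 \<le> c"
  proof (rule ccontr)
    assume "\<not> 1 \<le> c"
    then have "c = 0" by simp
    with \<mu>c show False by simp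
  qed
  moreover have "d = k * c" using d by (simp add: c_def)
  ultimately have "0 < d" "k \<le> d" using \<open>0 < k\<close> by simp_all
  have "1 \<le> q" using div_le_mono[OF \<open>d \<le> n\<close>, of d] \<open>0 < d\<close> by (simp add: q_def)
  have dq: "d * q \<le> n" using div_times_less_eq_dividend[of n d] by (simp add: q_def mult.commute)
  then have "k * q \<le> n" using \<open>k \<le> d\<close> by (meson le_trans mult_le_mono1)
  moreover have u_le_kq: "(k - 1) * q + 1 \<le> k * q" using \<open>1 \<le> q\<close> \<open>0 < k\<close> by (cases k) auto
  moreover have "q \<le> k * q" using \<open>0 < k\<close> by simp
  ultimately show "(k - 1) * q + 1 \<le> n" "q \<le> n" by linarith+
  have "n = d * q + n mod d" by (simp add: q_def)
  moreover have "n mod d < d" using \<open>0 < d\<close> by simp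
  moreover have "d \<le> d * q" using \<open>1 \<le> q\<close> by simp
  ultimately have "n \<le> 2 * d * q" by linarith
  then have "real n \<le> real (2 * d * q)" by (simp only: of_nat_le_iff)
  then have "real n \<le> real q * (2 * real d)" by (simp add: mult_ac)
  then show "real n / (2 * d) \<le> real q"
    using pos_divide_le_eq[of "2 * real d" "real n" "real q"] \<open>0 < d\<close> by simp
  have "real ((k - 1) * q + 1) \<le> real (k * q)" using u_le_kq by (simp only: of_nat_le_iff)
  also have "\<dots> \<le> \<mu> * real c * real (k * q)"
    using mult_right_mono[OF \<mu>c, of "real (k * q)"] by simp
  also have "\<dots> = \<mu> * real (d * q)" by (simp add: \<open>d = k * c\<close>)
  also have "\<dots> \<le> \<mu> * real n"
    using \<open>0 < \<mu>\<close> dq by (intro mult_left_mono) (simp_all only: of_nat_le_iff less_imp_le)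
  finally show "real ((k - 1) * q + 1) \<le> \<mu> * real n" .
qed

theorem theorem1p3:
  fixes p \<mu> :: real and k l m :: nat
  assumes "0 < p" "p < 1" "\<mu> > 0" "k \<ge> 3" "1 \<le> l" "l \<le> k - 2" "m \<ge> 2"
  shows "\<exists>n0 (\<alpha>::real). \<alpha> > 0 \<and> (\<forall>n\<ge>n0. \<exists>(V::nat \<Rightarrow> nat set) (E::nat set set).
            kpartite_kgraph k V E \<and> (\<forall>i<k. card (V i) = n) \<and>
            pmu_dense k V E p \<mu> \<and>
            partite_min_deg_ge k V E l (\<alpha> * real n ^ (k - l)) \<and>
            \<not> has_factor (kpart_vertices k V, E) (complete_kpartite k m))"
proof -
  define d where "d = k * nat \<lceil>1 / \<mu>\<rceil>"
  have "0 < k" "l + 2 \<le> k" "p \<le> 1" using assms by auto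
  then have "0 < d" using assms by (simp add: d_def)
  have "\<exists>(V::nat \<Rightarrow> nat set) E. kpartite_kgraph k V E \<and> (\<forall>i<k. card (V i) = n) \<and> pmu_dense k V E p \<mu> \<and>
      partite_min_deg_ge k V E l (1 / (2 * d) * real n ^ (k - l)) \<and>
      \<not> has_factor (kpart_vertices k V, E) (complete_kpartite k m)" if "d \<le> n" for n
  proof -
    define q where "q = n div d"
    note q = barrier_parameters[OF \<open>0 < \<mu>\<close> \<open>0 < k\<close> d_def that, folded q_def]
    have "0 < n" using \<open>0 < d\<close> that by simp
    then obtain V :: "nat \<Rightarrow> nat set" and E where VE: "kpartite_kgraph k V E" "\<forall>i<k. card (V i) = n"
      "pmu_dense k V E p \<mu>" "partite_min_deg_ge k V E l (real (q * n ^ (k - l - 1)))"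
      "\<not> has_factor (kpart_vertices k V, E) (complete_kpartite k m)"
      using space_barrier_graph_exists[OF \<open>0 < k\<close> _ q(1,2) less_add_one q(3) \<open>p \<le> 1\<close> \<open>l + 2 \<le> k\<close>]
      by blast
    have "k - l = Suc (k - l - 1)" using assms by simp
    then have "1 / (2 * d) * real n ^ (k - l) = real n / (2 * d) * real n ^ (k - l - 1)"
      by (metis power_Suc times_divide_eq_left times_divide_eq_right mult_1)
    also have "\<dots> \<le> real (q * n ^ (k - l - 1))"
      using mult_right_mono[OF q(4), of "real n ^ (k - l - 1)"] by simp
    finally show ?thesis using VE partite_min_deg_ge_mono by blast
  qed
  then show ?thesis using \<open>0 < d\<close> by (intro exI[of _ d] exI[of _ "1 / (2 * d)"]) auto
qed

end
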